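(* Let $j\geq1$, let $\lambda=(\lambda_1,\ldots,\lambda_{j-1})$ and $\mu=(\mu_{j+2},\ldots,\mu_\ell)$ be integer vectors, and let $D$ be a valid set of pairs. Assume that $\sigma^j=\sigma^{j+1}$, $(j,j+1)\notin D$, and that for each $h<j$, $(h,j)\in D$ if and only if $(h,j+1)\in D$. (a) For any integers $r$ and $s$, we have $R^D\sigma_{\lambda,r,s,\mu}=-R^D\sigma_{\lambda,s-1,r+1,\mu}$ in $\mathbb{Z}[\sigma]$. (b) For any integer $r$, we have $R^D\tau_{\lambda,r,r,\mu}=R^D\sigma_{\lambda,r,r,\mu}$ in $\mathbb{Z}[\sigma,z]$.
   Context: For each $r\geq1$, $\sigma^r=(\sigma^r_i)_{i\in\mathbb{Z}}$ is a sequence of variables with $\sigma^r_0=1$ and $\sigma^r_i=0$ for $i<0$; $\mathbb{Z}[\sigma]$ is the polynomial ring in the $\sigma^r_i$, $i,r\geq1$ (with the identification $\sigma^j=\sigma^{j+1}$ imposed by the hypothesis). For an integer sequence $\alpha$, $\sigma_\alpha:=\sigma^1_{\alpha_1}\sigma^2_{\alpha_2}\cdots$. $(\lambda,r,s,\mu)$ denotes the concatenated vector $(\lambda_1,\ldots,\lambda_{j-1},r,s,\mu_{j+2},\ldots,\mu_\ell)$. For $i<j$, $R_{ij}$ raises the $i$-th entry by 1 and lowers the $j$-th by 1; a raising operator $R$ is a monomial in the $R_{ij}$, and $R\sigma_\alpha:=\sigma_{R\alpha}$. A valid set of pairs is a finite subset $D$ of $\{(i,j)\in\mathbb{Z}^2\mid1\leq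 i<j\}$ which is an order ideal for the order $(i',j')\leq(i,j)$ iff $i'\leq i$ and $j'\leq j$. $R^D:=\prod_{1\leq i<j\leq\ell}(1-R_{ij})\prod_{(i,j)\in D}(1+R_{ij})^{-1}$, expanded as a power series and applied linearly. Let $z$ be a variable; $\tau^r:=\sigma^r$ for $r\neq j$ and $\tau^j_p:=\sigma^j_p+z\sigma^j_{p-1}$ for $p\in\mathbb{Z}$; $\tau_\alpha:=\tau^1_{\alpha_1}\tau^2_{\alpha_2}\cdots$, $R\tau_\alpha:=\tau_{R\alpha}$. *)

theory Defs
  imports Main "HOL-Library.Groups_Big_Fun"
begin

text \<open>The ring Z[sigma] (modulo the imposed identification) is modelled by evaluation:
  a family of elements sigma r p of an arbitrary commutative ring, indexed by the
  superscript r and the integer subscript p.\<close>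

definition sigma_normalized :: "(nat \<Rightarrow> int \<Rightarrow> 'a::comm_ring_1) \<Rightarrow> bool" where
  "sigma_normalized \<sigma> \<longleftrightarrow> (\<forall>r\<ge>1. \<sigma> r 0 = 1 \<and> (\<forall>i<0. \<sigma> r i = 0))"

text \<open>sigma_alpha = sigma^1_{alpha_1} sigma^2_{alpha_2} ... for a vector alpha of length l
  (given as a list; entry alpha_k is the list element at index k-1).\<close>
definition sigma_mon :: "(nat \<Rightarrow> int \<Rightarrow> 'a::comm_ring_1) \<Rightarrow> int list \<Rightarrow> 'a" where
  "sigma_mon \<sigma> \<alpha> = (\<Prod>k<length \<alpha>. \<sigma> (Suc k) (\<alpha> ! k))"

definition valid_pairs :: "(nat \<times> nat) set \<Rightarrow> bool" where
  "valid_pairs D \<longleftrightarrow> finite D \<and> D \<subseteq> {(i,j). 1 \<le> i \<and> i < j} \<and>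
     (\<forall>i j i' j'. (i,j) \<in> D \<longrightarrow> 1 \<le> i' \<longrightarrow> i' < j' \<longrightarrow> i' \<le> i \<longrightarrow> j' \<le> j \<longrightarrow> (i',j') \<in> D)"

definition pairs_upto :: "nat \<Rightarrow> (nat \<times> nat) set" where
  "pairs_upto l = {(i,j). 1 \<le> i \<and> i < j \<and> j \<le> l}"

text \<open>The raising operator R = prod R_ij^(n(i,j)) applied to an integer vector:
  entry p is raised by n(p,j) for each j > p and lowered by n(i,p) for each i < p.\<close>
definition raise_vec :: "(nat \<times> nat \<Rightarrow> nat) \<Rightarrow> int list \<Rightarrow> int list" where
  "raise_vec n \<alpha> = map (\<lambda>k. \<alpha> ! k + int (\<Sum>j\<in>{Suc (Suc k)..length \<alpha>}. n (Suc k, j))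
                                 - int (\<Sum>i\<in>{1..k}. n (i, Suc k))) [0..<length \<alpha>]"

text \<open>Coefficient of x^m in the power series (1 - x)(1 + x)^{-1} (if the pair is in D),
  resp. in 1 - x (otherwise).\<close>
definition pair_coeff :: "(nat \<times> nat) set \<Rightarrow> nat \<times> nat \<Rightarrow> nat \<Rightarrow> int" where
  "pair_coeff D p m =
     (if p \<in> D then (if m = 0 then 1 else 2 * (-1) ^ m)
      else (if m = 0 then 1 else if m = 1 then -1 else 0))"

text \<open>Coefficient of prod R_ij^(n(i,j)) in R^D = prod_{i<j<=l}(1 - R_ij) prod_{(i,j) in D}(1 + R_ij)^{-1}.\<close>
definition RD_coeff :: "(nat \<times> nat) set \<Rightarrow> nat \<Rightarrow> (nat \<times> nat \<Rightarrow> nat) \<Rightarrow> int" where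
  "RD_coeff D l n = (\<Prod>p\<in>pairs_upto l. pair_coeff D p (n p))"

text \<open>R^D applied (linearly) to sigma_alpha: the sum over all raising operators,
  i.e. all exponent functions n supported on the pairs i<j<=l (only finitely many terms are
  nonzero, since sigma vanishes at negative subscripts).\<close>
definition RD_apply :: "(nat \<times> nat) set \<Rightarrow> (nat \<Rightarrow> int \<Rightarrow> 'a::comm_ring_1) \<Rightarrow> int list \<Rightarrow> 'a" where
  "RD_apply D \<sigma> \<alpha> = Sum_any (\<lambda>n. if (\<forall>p. p \<notin> pairs_upto (length \<alpha>) \<longrightarrow> n p = 0)
       then of_int (RD_coeff D (length \<alpha>) n) * sigma_mon \<sigma> (raise_vec n \<alpha>) else 0)"

definition tau :: "nat \<Rightarrow> 'a::comm_ring_1 \<Rightarrow> (nat \<Rightarrow> int \<Rightarrow> 'a) \<Rightarrow> nat \<Rightarrow> int \<Rightarrow> 'a" where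
  "tau j z \<sigma> r p = (if r = j then \<sigma> j p + z * \<sigma> j (p - 1) else \<sigma> r p)"

end

(*
  Write e = (j, j+1) and let R' be the part of R^D coming from the pairs other than e. Since e is
  not in D, the factor of R^D at e is 1 - R_e, so R^D sigma_beta = R' sigma_beta - R' R_e sigma_beta.
  The transposition of j and j+1 permutes the pairs other than e and preserves membership in D
  (by the hypothesis on the pairs (h, j), (h, j+1), and because D is an order ideal avoiding e).
  As sigma^j = sigma^(j+1), a monomial does not change when its entries j and j+1 are swapped, and
  swapping them in R_e gamma gives the dot action gamma' of the transposition on gamma. Conjugating
  by the transposition thus turns R' R_e sigma_beta into R' sigma_beta', so that
  R^D sigma_beta = R' sigma_beta - R' sigma_beta'. This is antisymmetric under beta <-> beta', which
  is (a), and vanishes when beta = beta', i.e. for beta = (lambda, r-1, r, mu); as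
  tau_alpha = sigma_alpha + z sigma_(alpha - e_j), this gives (b).
  All sums are finite: R_ab lowers the weight sum_k k alpha_k by b - a > 0, while sigma vanishes at
  negative subscripts.
*)

theory Submission
  imports Defs "HOL-Combinatorics.Transposition"
begin

lemma Sum_any_uminus: "Sum_any (\<lambda>x. - f x) = - Sum_any (f :: 'b \<Rightarrow> 'a::ab_group_add)"
proof -
  have "{x. - f x \<noteq> 0} = {x. f x \<noteq> 0}" by auto
  then show ?thesis by (simp add: Sum_any.expand_set sum_negf)
qed

lemma Sum_any_fiber_fun_upd:
  fixes f :: "('a \<Rightarrow> 'b) \<Rightarrow> 'c::comm_monoid_add"
  assumes "u \<noteq> v"
  shows "Sum_any (\<lambda>n. if n x = u then f n else 0) = Sum_any (\<lambda>n. if n x = v then f (n(x := u)) else 0)"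
proof -
  define t where "t n = n(x := if n x = u then v else if n x = v then u else n x)" for n :: "'a \<Rightarrow> 'b"
  show ?thesis
  proof (rule Sum_any.reindex_cong[of t])
    show "bij t"
      by (rule involuntory_imp_bij) (auto simp: t_def fun_eq_iff)
    show "(\<lambda>n. if n x = u then f n else 0) \<circ> t = (\<lambda>n. if n x = v then f (n(x := u)) else 0)"
      using assms by (auto simp: t_def fun_eq_iff)
  qed
qed

lemma finite_pairs_upto: "finite (pairs_upto l)"
  by (rule finite_subset[of _ "{..l} \<times> {..l}"]) (auto simp: pairs_upto_def)

definition row_sum :: "nat \<Rightarrow> (nat \<times> nat \<Rightarrow> nat) \<Rightarrow> nat \<Rightarrow> nat" where
  "row_sum l n a = (\<Sum>b\<le>l. n (a, b))"

definition col_sum :: "nat \<Rightarrow> (nat \<times> nat \<Rightarrow> nat) \<Rightarrow> nat \<Rightarrow> nat" where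
  "col_sum l n b = (\<Sum>a\<le>l. n (a, b))"

lemma length_raise_vec [simp]: "length (raise_vec n \<beta>) = length \<beta>"
  by (simp add: raise_vec_def)

lemma nth_raise_vec:
  assumes "{p. n p \<noteq> 0} \<subseteq> pairs_upto (length \<beta>)" and "i < length \<beta>"
  shows "raise_vec n \<beta> ! i
       = \<beta> ! i + int (row_sum (length \<beta>) n (Suc i)) - int (col_sum (length \<beta>) n (Suc i))"
proof -
  have zero: "n (a, b) = 0" if "\<not> (1 \<le> a \<and> a < b \<and> b \<le> length \<beta>)" for a b
    using assms(1) that by (auto simp: pairs_upto_def)
  have "(\<Sum>b\<in>{Suc (Suc i)..length \<beta>}. n (Suc i, b)) = row_sum (length \<beta>) n (Suc i)"
    unfolding row_sum_def by (rule sum.mono_neutral_left) (auto intro: zero)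
  moreover have "(\<Sum>a\<in>{1..i}. n (a, Suc i)) = col_sum (length \<beta>) n (Suc i)"
    unfolding col_sum_def by (rule sum.mono_neutral_left) (use assms(2) in \<open>auto intro: zero\<close>)
  ultimately show ?thesis
    using assms(2) by (simp add: raise_vec_def del: of_nat_sum)
qed

lemma raise_vec_list_update:
  assumes "i < length \<beta>"
  shows "raise_vec n (\<beta>[i := x]) = (raise_vec n \<beta>)[i := raise_vec n \<beta> ! i + (x - \<beta> ! i)]"
  using assms by (auto simp: raise_vec_def nth_list_update intro!: nth_equalityI)

lemma raise_vec_fun_upd_Suc:
  assumes "1 \<le> a" and "a < b" and "b \<le> length \<beta>"
  shows "raise_vec (n((a, b) := Suc (n (a, b)))) \<beta>
       = (raise_vec n \<beta>)[a - 1 := raise_vec n \<beta> ! (a - 1) + 1, b - 1 := raise_vec n \<beta> ! (b - 1) - 1]"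
proof -
  let ?n' = "n((a, b) := Suc (n (a, b)))"
  have row: "(\<Sum>x\<in>A. ?n' (c, x)) = (\<Sum>x\<in>A. n (c, x)) + of_bool (c = a \<and> b \<in> A)"
    if "finite A" for A c
  proof -
    have "(\<Sum>x\<in>A. ?n' (c, x)) = (\<Sum>x\<in>A. n (c, x) + (if x = b then of_bool (c = a) else 0))"
      by (rule sum.cong) auto
    then show ?thesis using that by (simp add: sum.distrib)
  qed
  have col: "(\<Sum>x\<in>A. ?n' (x, c)) = (\<Sum>x\<in>A. n (x, c)) + of_bool (c = b \<and> a \<in> A)"
    if "finite A" for A c
  proof -
    have "(\<Sum>x\<in>A. ?n' (x, c)) = (\<Sum>x\<in>A. n (x, c) + (if x = a then of_bool (c = b) else 0))"
      by (rule sum.cong) auto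
    then show ?thesis using that by (simp add: sum.distrib)
  qed
  show ?thesis
  proof (rule nth_equalityI)
    fix k assume "k < length (raise_vec ?n' \<beta>)"
    then have k: "k < length \<beta>" by simp
    have "(Suc k = a \<and> b \<in> {Suc (Suc k)..length \<beta>}) = (Suc k = a)"
      and "(Suc k = b \<and> a \<in> {1..k}) = (Suc k = b)"
      using assms by auto
    moreover have "raise_vec m \<beta> ! k = \<beta> ! k + int (\<Sum>x\<in>{Suc (Suc k)..length \<beta>}. m (Suc k, x))
        - int (\<Sum>x\<in>{1..k}. m (x, Suc k))" for m
      using k by (simp add: raise_vec_def del: of_nat_sum)
    ultimately have eq: "raise_vec ?n' \<beta> ! k = raise_vec n \<beta> ! k + of_bool (Suc k = a) - of_bool (Suc k = b)"
      by (simp only: row finite_atLeastAtMost col) simp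
    have upd: "(raise_vec n \<beta>)[a - 1 := x, b - 1 := y] ! k
        = (if k = b - 1 then y else if k = a - 1 then x else raise_vec n \<beta> ! k)" for x y
      using k assms by (simp add: nth_list_update)
    show "raise_vec ?n' \<beta> ! k = (raise_vec n \<beta>)[a - 1 := raise_vec n \<beta> ! (a - 1) + 1,
        b - 1 := raise_vec n \<beta> ! (b - 1) - 1] ! k"
      unfolding eq upd using assms by auto
  qed simp
qed

lemma weighted_sum_raise_vec:
  assumes "{p. n p \<noteq> 0} \<subseteq> pairs_upto (length \<beta>)"
  shows "(\<Sum>i<length \<beta>. int (Suc i) * raise_vec n \<beta> ! i)
       = (\<Sum>i<length \<beta>. int (Suc i) * \<beta> ! i)
         - (\<Sum>a\<le>length \<beta>. \<Sum>b\<le>length \<beta>. (int b - int a) * int (n (a, b)))"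
proof -
  let ?l = "length \<beta>"
  have rows: "(\<Sum>i<?l. int (Suc i) * int (row_sum ?l n (Suc i))) = (\<Sum>a\<le>?l. \<Sum>b\<le>?l. int a * int (n (a, b)))"
    using sum.atMost_shift[of "\<lambda>c. int c * int (row_sum ?l n c)" ?l]
    by (simp add: row_sum_def sum_distrib_left)
  have "(\<Sum>i<?l. int (Suc i) * int (col_sum ?l n (Suc i))) = (\<Sum>b\<le>?l. \<Sum>a\<le>?l. int b * int (n (a, b)))"
    using sum.atMost_shift[of "\<lambda>c. int c * int (col_sum ?l n c)" ?l]
    by (simp add: col_sum_def sum_distrib_left)
  also have "\<dots> = (\<Sum>a\<le>?l. \<Sum>b\<le>?l. int b * int (n (a, b)))"
    by (rule sum.swap)
  finally have cols: "(\<Sum>i<?l. int (Suc i) * int (col_sum ?l n (Suc i))) = (\<Sum>a\<le>?l. \<Sum>b\<le>?l. int b * int (n (a, b)))" .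
  have entry: "int (Suc i) * raise_vec n \<beta> ! i = int (Suc i) * \<beta> ! i
      + int (Suc i) * int (row_sum ?l n (Suc i)) - int (Suc i) * int (col_sum ?l n (Suc i))"
    if "i < ?l" for i
    unfolding nth_raise_vec[OF assms that] by (simp add: algebra_simps)
  have "(\<Sum>i<?l. int (Suc i) * raise_vec n \<beta> ! i) = (\<Sum>i<?l. int (Suc i) * \<beta> ! i
      + int (Suc i) * int (row_sum ?l n (Suc i)) - int (Suc i) * int (col_sum ?l n (Suc i)))"
    by (rule sum.cong[OF refl], rule entry) simp
  also have "\<dots> = (\<Sum>i<?l. int (Suc i) * \<beta> ! i)
        + (\<Sum>a\<le>?l. \<Sum>b\<le>?l. int a * int (n (a, b))) - (\<Sum>a\<le>?l. \<Sum>b\<le>?l. int b * int (n (a, b)))"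
    by (simp only: sum.distrib sum_subtractf rows cols)
  finally show ?thesis
    by (simp add: algebra_simps sum_subtractf)
qed

lemma raise_exponent_le_weighted_sum:
  assumes supp: "{p. n p \<noteq> 0} \<subseteq> pairs_upto (length \<beta>)"
    and nonneg: "\<forall>i<length \<beta>. 0 \<le> raise_vec n \<beta> ! i"
  shows "int (n p) \<le> (\<Sum>i<length \<beta>. int (Suc i) * \<beta> ! i)"
proof -
  let ?l = "length \<beta>"
  have term_nonneg: "0 \<le> (int b - int a) * int (n (a, b))" for a b
    using supp by (cases "n (a, b) = 0") (auto simp: pairs_upto_def)
  have "int (n p) \<le> (\<Sum>a\<le>?l. \<Sum>b\<le>?l. (int b - int a) * int (n (a, b)))"
  proof (cases "n p = 0")
    case True
    then show ?thesis by (simp add: term_nonneg sum_nonneg)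
  next
    case False
    then obtain a b where p: "p = (a, b)" "a < b" "b \<le> ?l"
      using supp by (cases p) (auto simp: pairs_upto_def)
    have "int (n p) \<le> (int b - int a) * int (n (a, b))"
      using p mult_right_mono[of 1 "int b - int a" "int (n (a, b))"] by simp
    also have "\<dots> \<le> (\<Sum>b'\<le>?l. (int b' - int a) * int (n (a, b')))"
      by (rule member_le_sum) (use p term_nonneg in auto)
    also have "\<dots> \<le> (\<Sum>a'\<le>?l. \<Sum>b'\<le>?l. (int b' - int a') * int (n (a', b')))"
      by (rule member_le_sum[where f = "\<lambda>a'. \<Sum>b'\<le>?l. (int b' - int a') * int (n (a', b'))"])
        (use p term_nonneg in \<open>auto intro: sum_nonneg\<close>)
    finally show ?thesis .
  qed
  moreover have "0 \<le> (\<Sum>i<?l. int (Suc i) * raise_vec n \<beta> ! i)"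
    using nonneg by (auto intro: sum_nonneg)
  ultimately show ?thesis
    using weighted_sum_raise_vec[OF supp] by linarith
qed

lemma finite_nonneg_raise_vec:
  "finite {n. {p. n p \<noteq> 0} \<subseteq> pairs_upto (length \<beta>) \<and> (\<forall>i<length \<beta>. 0 \<le> raise_vec n \<beta> ! i)}"
proof -
  define B where "B = nat (\<Sum>i<length \<beta>. int (Suc i) * \<beta> ! i)"
  have fin: "finite {n. \<forall>p. (p \<in> pairs_upto (length \<beta>) \<longrightarrow> n p \<in> {..B})
                   \<and> (p \<notin> pairs_upto (length \<beta>) \<longrightarrow> n p = 0)}"
    by (rule finite_set_of_finite_funs) (simp_all add: finite_pairs_upto)
  have bound: "n p \<le> B"
    if "{p. n p \<noteq> 0} \<subseteq> pairs_upto (length \<beta>)" and "\<forall>i<length \<beta>. 0 \<le> raise_vec n \<beta> ! i" for n p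
    using raise_exponent_le_weighted_sum[OF that, of p] by (simp add: B_def le_nat_iff)
  show ?thesis
  proof (rule rev_finite_subset[OF fin], intro subsetI CollectI allI conjI impI)
    fix n p
    assume "n \<in> {n. {p. n p \<noteq> 0} \<subseteq> pairs_upto (length \<beta>) \<and> (\<forall>i<length \<beta>. 0 \<le> raise_vec n \<beta> ! i)}"
    then have supp: "{p. n p \<noteq> 0} \<subseteq> pairs_upto (length \<beta>)" and "\<forall>i<length \<beta>. 0 \<le> raise_vec n \<beta> ! i"
      by auto
    then show "n p \<in> {..B}" using bound by simp
    show "p \<notin> pairs_upto (length \<beta>) \<Longrightarrow> n p = 0" using supp by auto
  qed
qed

lemma sigma_mon_eq_0:
  assumes "sigma_normalized \<sigma>" and "i < length \<gamma>" and "\<gamma> ! i < 0"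
  shows "sigma_mon \<sigma> \<gamma> = 0"
  unfolding sigma_mon_def
  by (rule prod_zero) (use assms in \<open>auto simp: sigma_normalized_def\<close>)

lemma sigma_mon_list_update:
  assumes "i < length \<gamma>"
  shows "sigma_mon \<sigma> (\<gamma>[i := x]) = \<sigma> (Suc i) x * (\<Prod>k\<in>{..<length \<gamma>} - {i}. \<sigma> (Suc k) (\<gamma> ! k))"
proof -
  have "(\<Prod>k\<in>{..<length \<gamma>} - {i}. \<sigma> (Suc k) (\<gamma>[i := x] ! k)) = (\<Prod>k\<in>{..<length \<gamma>} - {i}. \<sigma> (Suc k) (\<gamma> ! k))"
    by (rule prod.cong) auto
  then show ?thesis
    using assms prod.remove[of "{..<length \<gamma>}" i "\<lambda>k. \<sigma> (Suc k) (\<gamma>[i := x] ! k)"]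
    by (simp add: sigma_mon_def)
qed

lemma sigma_mon_swap_entries:
  assumes "i < length \<gamma>" and "i' < length \<gamma>" and "i \<noteq> i'" and "\<sigma> (Suc i) = \<sigma> (Suc i')"
  shows "sigma_mon \<sigma> (\<gamma>[i := x, i' := y]) = sigma_mon \<sigma> (\<gamma>[i := y, i' := x])"
proof -
  let ?t = "Transposition.transpose i i'"
  have "sigma_mon \<sigma> (\<gamma>[i := x, i' := y]) = (\<Prod>k<length \<gamma>. \<sigma> (Suc (?t k)) (\<gamma>[i := y, i' := x] ! ?t k))"
    unfolding sigma_mon_def using assms
    by (intro prod.cong) (auto simp: nth_list_update Transposition.transpose_def)
  also have "\<dots> = sigma_mon \<sigma> (\<gamma>[i := y, i' := x])"
    unfolding sigma_mon_def
    by (rule prod.reindex_bij_betw[of ?t, where g = "\<lambda>k. \<sigma> (Suc k) (\<gamma>[i := y, i' := x] ! k)", simplified])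
      (use assms in simp)
  finally show ?thesis .
qed

lemma sigma_mon_tau:
  assumes "1 \<le> j" and "j \<le> length \<gamma>"
  shows "sigma_mon (tau j z \<sigma>) \<gamma> = sigma_mon \<sigma> \<gamma> + z * sigma_mon \<sigma> (\<gamma>[j - 1 := \<gamma> ! (j - 1) - 1])"
proof -
  let ?i = "j - 1"
  define R where "R = (\<Prod>k\<in>{..<length \<gamma>} - {?i}. \<sigma> (Suc k) (\<gamma> ! k))"
  have i: "?i < length \<gamma>" and j: "Suc ?i = j"
    using assms by auto
  have "(\<Prod>k\<in>{..<length \<gamma>} - {?i}. tau j z \<sigma> (Suc k) (\<gamma> ! k)) = R"
    unfolding R_def by (rule prod.cong) (use j in \<open>auto simp: tau_def\<close>)
  then have "sigma_mon (tau j z \<sigma>) \<gamma> = tau j z \<sigma> j (\<gamma> ! ?i) * R"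
    using sigma_mon_list_update[OF i, of "tau j z \<sigma>" "\<gamma> ! ?i"] by (simp only: j list_update_id)
  moreover have "sigma_mon \<sigma> \<gamma> = \<sigma> j (\<gamma> ! ?i) * R"
    using sigma_mon_list_update[OF i, of \<sigma> "\<gamma> ! ?i"] by (simp only: R_def j list_update_id)
  moreover have "sigma_mon \<sigma> (\<gamma>[?i := \<gamma> ! ?i - 1]) = \<sigma> j (\<gamma> ! ?i - 1) * R"
    using sigma_mon_list_update[OF i, of \<sigma> "\<gamma> ! ?i - 1"] by (simp only: R_def j)
  ultimately show ?thesis
    by (simp add: tau_def distrib_right)
qed

lemma RD_coeff_remove:
  assumes "p \<in> pairs_upto l"
  shows "RD_coeff D l n = pair_coeff D p (n p) * (\<Prod>q\<in>pairs_upto l - {p}. pair_coeff D q (n q))"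
  unfolding RD_coeff_def using assms finite_pairs_upto by (simp add: prod.remove)

definition RD_summand :: "(nat \<times> nat) set \<Rightarrow> (nat \<Rightarrow> int \<Rightarrow> 'a::comm_ring_1) \<Rightarrow> (nat \<times> nat) set
    \<Rightarrow> int list \<Rightarrow> (nat \<times> nat \<Rightarrow> nat) \<Rightarrow> 'a" where
  "RD_summand D \<sigma> S \<beta> n = (if {p. n p \<noteq> 0} \<subseteq> S
     then of_int (RD_coeff D (length \<beta>) n) * sigma_mon \<sigma> (raise_vec n \<beta>) else 0)"

lemma RD_apply_eq_Sum_any_RD_summand:
  "RD_apply D \<sigma> \<beta> = Sum_any (RD_summand D \<sigma> (pairs_upto (length \<beta>)) \<beta>)"
proof -
  have "(\<forall>p. p \<notin> pairs_upto (length \<beta>) \<longrightarrow> n p = 0) \<longleftrightarrow> {p. n p \<noteq> 0} \<subseteq> pairs_upto (length \<beta>)"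
    for n :: "nat \<times> nat \<Rightarrow> nat"
    by (auto simp del: split_paired_All)
  then show ?thesis
    unfolding RD_apply_def RD_summand_def by simp
qed

lemma finite_RD_summand_support:
  assumes "sigma_normalized \<sigma>" and "S \<subseteq> pairs_upto (length \<beta>)"
  shows "finite {n. RD_summand D \<sigma> S \<beta> n \<noteq> 0}"
proof (rule rev_finite_subset[OF finite_nonneg_raise_vec[of \<beta>]], rule subsetI)
  fix n assume "n \<in> {n. RD_summand D \<sigma> S \<beta> n \<noteq> 0}"
  then have supp: "{p. n p \<noteq> 0} \<subseteq> S" and mon: "sigma_mon \<sigma> (raise_vec n \<beta>) \<noteq> 0"
    by (auto simp: RD_summand_def split: if_splits)
  have "\<forall>i<length \<beta>. 0 \<le> raise_vec n \<beta> ! i"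
    using sigma_mon_eq_0[OF assms(1)] mon by (metis length_raise_vec not_le)
  then show "n \<in> {n. {p. n p \<noteq> 0} \<subseteq> pairs_upto (length \<beta>) \<and> (\<forall>i<length \<beta>. 0 \<le> raise_vec n \<beta> ! i)}"
    using supp assms(2) by blast
qed

lemma RD_apply_tau:
  assumes "1 \<le> j" and "j \<le> length \<alpha>" and "sigma_normalized \<sigma>"
  shows "RD_apply D (tau j z \<sigma>) \<alpha> = RD_apply D \<sigma> \<alpha> + z * RD_apply D \<sigma> (\<alpha>[j - 1 := \<alpha> ! (j - 1) - 1])"
proof -
  let ?P = "pairs_upto (length \<alpha>)" and ?\<alpha>' = "\<alpha>[j - 1 := \<alpha> ! (j - 1) - 1]"
  have i: "j - 1 < length \<alpha>" using assms by simp
  have raise: "raise_vec n ?\<alpha>' = (raise_vec n \<alpha>)[j - 1 := raise_vec n \<alpha> ! (j - 1) - 1]" for n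
    using raise_vec_list_update[OF i] by simp
  have summand: "RD_summand D (tau j z \<sigma>) ?P \<alpha> n = RD_summand D \<sigma> ?P \<alpha> n + z * RD_summand D \<sigma> ?P ?\<alpha>' n" for n
    using sigma_mon_tau[OF assms(1), of "raise_vec n \<alpha>" z \<sigma>] assms(2)
    unfolding RD_summand_def raise by (simp add: algebra_simps)
  have fin: "finite {n. RD_summand D \<sigma> ?P \<alpha> n \<noteq> 0}" "finite {n. RD_summand D \<sigma> ?P ?\<alpha>' n \<noteq> 0}"
    by (rule finite_RD_summand_support[OF assms(3)], simp)+
  have "finite {n. z * RD_summand D \<sigma> ?P ?\<alpha>' n \<noteq> 0}"
    using fin(2) by (rule rev_finite_subset) auto
  then have "RD_apply D (tau j z \<sigma>) \<alpha> = RD_apply D \<sigma> \<alpha> + Sum_any (\<lambda>n. z * RD_summand D \<sigma> ?P ?\<alpha>' n)"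
    unfolding RD_apply_eq_Sum_any_RD_summand summand length_list_update
    by (rule Sum_any.distrib[OF fin(1)])
  also have "Sum_any (\<lambda>n. z * RD_summand D \<sigma> ?P ?\<alpha>' n) = z * RD_apply D \<sigma> ?\<alpha>'"
    unfolding RD_apply_eq_Sum_any_RD_summand length_list_update
    by (rule Sum_any_right_distrib[OF fin(2), symmetric])
  finally show ?thesis .
qed

lemma Sum_any_RD_summand_split:
  assumes "sigma_normalized \<sigma>" and "e \<in> pairs_upto (length \<beta>)" and "e \<notin> D"
  shows "Sum_any (RD_summand D \<sigma> (pairs_upto (length \<beta>)) \<beta>)
       = Sum_any (RD_summand D \<sigma> (pairs_upto (length \<beta>) - {e}) \<beta>)
         + Sum_any (\<lambda>n. if n e = 1 then RD_summand D \<sigma> (pairs_upto (length \<beta>)) \<beta> n else 0)"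
proof -
  let ?P = "pairs_upto (length \<beta>)"
  let ?F = "RD_summand D \<sigma> ?P \<beta>"
  have not_supp: "\<not> {p. n p \<noteq> 0} \<subseteq> ?P - {e}" if "n e \<noteq> 0" for n
  proof -
    have "e \<in> {p. n p \<noteq> 0} - (?P - {e})" using that by simp
    then show ?thesis by blast
  qed
  have summand_split: "?F n = RD_summand D \<sigma> (?P - {e}) \<beta> n + (if n e = 1 then ?F n else 0)" for n
  proof -
    consider "n e = 0" | "n e = 1" | "2 \<le> n e" by linarith
    then show ?thesis
    proof cases
      case 1
      then have "{p. n p \<noteq> 0} \<subseteq> ?P - {e} \<longleftrightarrow> {p. n p \<noteq> 0} \<subseteq> ?P" by blast
      then show ?thesis using 1 by (simp add: RD_summand_def)
    next
      case 2
      then show ?thesis using not_supp[of n] by (simp add: RD_summand_def)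
    next
      case 3
      then have "RD_coeff D (length \<beta>) n = 0"
        using assms(3) by (simp add: RD_coeff_remove[OF assms(2)] pair_coeff_def)
      then show ?thesis using 3 not_supp[of n] by (simp add: RD_summand_def)
    qed
  qed
  have "finite {n. RD_summand D \<sigma> (?P - {e}) \<beta> n \<noteq> 0}"
    by (rule finite_RD_summand_support[OF assms(1)]) blast
  moreover have "finite {n. (if n e = 1 then ?F n else 0) \<noteq> 0}"
    by (rule rev_finite_subset[OF finite_RD_summand_support[OF assms(1) order_refl]]) auto
  ultimately have "Sum_any (\<lambda>n. RD_summand D \<sigma> (?P - {e}) \<beta> n + (if n e = 1 then ?F n else 0))
      = Sum_any (RD_summand D \<sigma> (?P - {e}) \<beta>) + Sum_any (\<lambda>n. if n e = 1 then ?F n else 0)"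
    by (rule Sum_any.distrib)
  then show ?thesis
    by (simp only: summand_split[symmetric])
qed

(* Entries j and j+1 sit at list positions j - 1 and j: (.., r, s, ..) becomes (.., s - 1, r + 1, ..). *)
definition dot_swap :: "nat \<Rightarrow> int list \<Rightarrow> int list" where
  "dot_swap j \<beta> = \<beta>[j - 1 := \<beta> ! j - 1, j := \<beta> ! (j - 1) + 1]"

lemma length_dot_swap [simp]: "length (dot_swap j \<beta>) = length \<beta>"
  by (simp add: dot_swap_def)

lemma nth_dot_swap:
  assumes "1 \<le> j" and "j < length \<beta>" and "i < length \<beta>"
  shows "dot_swap j \<beta> ! i
       = (if i = j - 1 then \<beta> ! j - 1 else if i = j then \<beta> ! (j - 1) + 1 else \<beta> ! i)"
  using assms by (auto simp: dot_swap_def nth_list_update)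

lemma dot_swap_append:
  "dot_swap (Suc (length xs)) (xs @ r # s # ys) = xs @ (s - 1) # (r + 1) # ys"
  by (simp add: dot_swap_def list_update_append nth_append)

definition transpose_pair :: "nat \<Rightarrow> nat \<times> nat \<Rightarrow> nat \<times> nat" where
  "transpose_pair j = map_prod (Transposition.transpose j (Suc j)) (Transposition.transpose j (Suc j))"

lemma transpose_pair_involutory [simp]: "transpose_pair j (transpose_pair j p) = p"
  by (cases p) (simp add: transpose_pair_def)

lemma transpose_pair_in_pairs_upto:
  assumes "1 \<le> j" and "Suc j \<le> l" and "p \<in> pairs_upto l - {(j, Suc j)}"
  shows "transpose_pair j p \<in> pairs_upto l - {(j, Suc j)}"
  using assms by (cases p) (auto simp: transpose_pair_def Transposition.transpose_def pairs_upto_def)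

lemma support_comp_transpose_pair:
  assumes "1 \<le> j" and "Suc j \<le> l" and "{p. n p \<noteq> 0} \<subseteq> pairs_upto l - {(j, Suc j)}"
  shows "{p. (n \<circ> transpose_pair j) p \<noteq> 0} \<subseteq> pairs_upto l - {(j, Suc j)}"
proof
  fix p assume "p \<in> {p. (n \<circ> transpose_pair j) p \<noteq> 0}"
  then have "n (transpose_pair j p) \<noteq> 0"
    by simp
  then have "transpose_pair j p \<in> pairs_upto l - {(j, Suc j)}"
    using assms(3) by blast
  then show "p \<in> pairs_upto l - {(j, Suc j)}"
    using transpose_pair_in_pairs_upto[OF assms(1,2), of "transpose_pair j p"] by simp
qed

lemma support_comp_transpose_pair_iff:
  assumes "1 \<le> j" and "Suc j \<le> l"
  shows "{p. (n \<circ> transpose_pair j) p \<noteq> 0} \<subseteq> pairs_upto l - {(j, Suc j)}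
     \<longleftrightarrow> {p. n p \<noteq> 0} \<subseteq> pairs_upto l - {(j, Suc j)}"
proof
  assume "{p. (n \<circ> transpose_pair j) p \<noteq> 0} \<subseteq> pairs_upto l - {(j, Suc j)}"
  then have "{p. (n \<circ> transpose_pair j \<circ> transpose_pair j) p \<noteq> 0} \<subseteq> pairs_upto l - {(j, Suc j)}"
    by (rule support_comp_transpose_pair[OF assms])
  then show "{p. n p \<noteq> 0} \<subseteq> pairs_upto l - {(j, Suc j)}"
    by simp
qed (rule support_comp_transpose_pair[OF assms])

lemma row_sum_comp_transpose_pair:
  assumes "Suc j \<le> l"
  shows "row_sum l (n \<circ> transpose_pair j) c = row_sum l n (Transposition.transpose j (Suc j) c)"
  unfolding row_sum_def transpose_pair_def
  by (rule sum.reindex_bij_witness[of _ "Transposition.transpose j (Suc j)" "Transposition.transpose j (Suc j)"])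
    (use assms in \<open>auto simp: Transposition.transpose_def\<close>)

lemma col_sum_comp_transpose_pair:
  assumes "Suc j \<le> l"
  shows "col_sum l (n \<circ> transpose_pair j) c = col_sum l n (Transposition.transpose j (Suc j) c)"
  unfolding col_sum_def transpose_pair_def
  by (rule sum.reindex_bij_witness[of _ "Transposition.transpose j (Suc j)" "Transposition.transpose j (Suc j)"])
    (use assms in \<open>auto simp: Transposition.transpose_def\<close>)

lemma raise_vec_comp_transpose_pair:
  assumes "1 \<le> j" and "Suc j \<le> length \<beta>" and supp: "{p. n p \<noteq> 0} \<subseteq> pairs_upto (length \<beta>) - {(j, Suc j)}"
  shows "raise_vec (n \<circ> transpose_pair j) (dot_swap j \<beta>) = dot_swap j (raise_vec n \<beta>)"
proof (rule nth_equalityI)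
  let ?l = "length \<beta>"
  have supp': "{p. (n \<circ> transpose_pair j) p \<noteq> 0} \<subseteq> pairs_upto ?l"
    using supp support_comp_transpose_pair_iff[OF assms(1,2), of n] by blast
  fix i assume "i < length (raise_vec (n \<circ> transpose_pair j) (dot_swap j \<beta>))"
  then have i: "i < ?l" by simp
  have "raise_vec (n \<circ> transpose_pair j) (dot_swap j \<beta>) ! i = dot_swap j \<beta> ! i
      + int (row_sum ?l n (Transposition.transpose j (Suc j) (Suc i)))
      - int (col_sum ?l n (Transposition.transpose j (Suc j) (Suc i)))"
    using nth_raise_vec[of "n \<circ> transpose_pair j" "dot_swap j \<beta>" i] supp' i assms(2)
    by (simp add: row_sum_comp_transpose_pair col_sum_comp_transpose_pair)
  moreover have "raise_vec n \<beta> ! k = \<beta> ! k + int (row_sum ?l n (Suc k)) - int (col_sum ?l n (Suc k))"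
    if "k < ?l" for k
    using nth_raise_vec[of n \<beta> k] supp that by blast
  ultimately show "raise_vec (n \<circ> transpose_pair j) (dot_swap j \<beta>) ! i = dot_swap j (raise_vec n \<beta>) ! i"
    using i assms(1,2) by (auto simp: nth_dot_swap Transposition.transpose_def)
qed simp

lemma transpose_pair_in_D_iff:
  assumes "valid_pairs D" and "1 \<le> j" and "(j, Suc j) \<notin> D" and "\<forall>h<j. (h, j) \<in> D \<longleftrightarrow> (h, Suc j) \<in> D"
    and "p \<in> pairs_upto l - {(j, Suc j)}"
  shows "transpose_pair j p \<in> D \<longleftrightarrow> p \<in> D"
proof -
  obtain a b where p: "p = (a, b)" and ab: "1 \<le> a" "a < b" "(a, b) \<noteq> (j, Suc j)"
    using assms(5) by (cases p) (auto simp: pairs_upto_def)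
  have not_in_D: "(j, c) \<notin> D" "(Suc j, c) \<notin> D" if "Suc j \<le> c" for c
    using assms(1-3) that unfolding valid_pairs_def by (meson Suc_leD le_refl lessI)+
  show ?thesis
  proof (cases "a = j \<or> a = Suc j")
    case True
    then have "Suc j < b" using ab by auto
    then show ?thesis using True not_in_D[of b] p by (auto simp: transpose_pair_def Transposition.transpose_def)
  next
    case False
    then show ?thesis using assms(4) ab p by (auto simp: transpose_pair_def Transposition.transpose_def)
  qed
qed

lemma RD_coeff_comp_transpose_pair:
  assumes "valid_pairs D" and "1 \<le> j" and "Suc j \<le> l" and "(j, Suc j) \<notin> D"
    and "\<forall>h<j. (h, j) \<in> D \<longleftrightarrow> (h, Suc j) \<in> D"
    and supp: "{p. n p \<noteq> 0} \<subseteq> pairs_upto l - {(j, Suc j)}"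
  shows "RD_coeff D l (n \<circ> transpose_pair j) = RD_coeff D l n"
proof -
  let ?Q = "pairs_upto l - {(j, Suc j)}"
  have e: "(j, Suc j) \<in> pairs_upto l"
    using assms(2,3) by (simp add: pairs_upto_def)
  have "n (j, Suc j) = 0" "n (Suc j, j) = 0"
    using supp by (auto simp: pairs_upto_def)
  then have e_factor: "(n \<circ> transpose_pair j) (j, Suc j) = n (j, Suc j)"
    by (simp add: transpose_pair_def)
  have "(\<Prod>p\<in>?Q. pair_coeff D p (n (transpose_pair j p))) = (\<Prod>p\<in>?Q. pair_coeff D (transpose_pair j p) (n (transpose_pair j p)))"
  proof (rule prod.cong[OF refl])
    fix p assume "p \<in> ?Q"
    then have "transpose_pair j p \<in> D \<longleftrightarrow> p \<in> D"
      by (rule transpose_pair_in_D_iff[OF assms(1,2,4,5)])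
    then show "pair_coeff D p (n (transpose_pair j p)) = pair_coeff D (transpose_pair j p) (n (transpose_pair j p))"
      by (simp add: pair_coeff_def)
  qed
  also have "\<dots> = (\<Prod>p\<in>?Q. pair_coeff D p (n p))"
    by (rule prod.reindex_bij_witness[of _ "transpose_pair j" "transpose_pair j"])
      (simp_all only: transpose_pair_involutory transpose_pair_in_pairs_upto[OF assms(2,3)])
  finally show ?thesis
    using e_factor by (simp add: RD_coeff_remove[OF e])
qed

lemma RD_summand_fun_upd_one:
  assumes "1 \<le> j" and "Suc j \<le> length \<beta>" and "(j, Suc j) \<notin> D" and "\<sigma> j = \<sigma> (Suc j)"
    and "n (j, Suc j) = 0"
  shows "RD_summand D \<sigma> (pairs_upto (length \<beta>)) \<beta> (n((j, Suc j) := 1))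
       = - (if {p. n p \<noteq> 0} \<subseteq> pairs_upto (length \<beta>) - {(j, Suc j)}
            then of_int (RD_coeff D (length \<beta>) n) * sigma_mon \<sigma> (dot_swap j (raise_vec n \<beta>)) else 0)"
proof -
  let ?l = "length \<beta>" and ?e = "(j, Suc j)"
  have e: "?e \<in> pairs_upto ?l"
    using assms(1,2) by (simp add: pairs_upto_def)
  have supp: "{p. (n(?e := 1)) p \<noteq> 0} \<subseteq> pairs_upto ?l \<longleftrightarrow> {p. n p \<noteq> 0} \<subseteq> pairs_upto ?l - {?e}"
    using assms(5) e by auto
  have "(\<Prod>q\<in>pairs_upto ?l - {?e}. pair_coeff D q ((n(?e := 1)) q))
      = (\<Prod>q\<in>pairs_upto ?l - {?e}. pair_coeff D q (n q))"
    by (rule prod.cong) auto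
  then have coeff: "RD_coeff D ?l (n(?e := 1)) = - RD_coeff D ?l n"
    using assms(3,5) by (simp add: RD_coeff_remove[OF e] pair_coeff_def)
  have "raise_vec (n(?e := 1)) \<beta>
      = (raise_vec n \<beta>)[j - 1 := raise_vec n \<beta> ! (j - 1) + 1, j := raise_vec n \<beta> ! j - 1]"
    using raise_vec_fun_upd_Suc[of j "Suc j" \<beta> n] assms(1,2,5) by simp
  also have "sigma_mon \<sigma> \<dots> = sigma_mon \<sigma> (dot_swap j (raise_vec n \<beta>))"
    unfolding dot_swap_def by (rule sigma_mon_swap_entries) (use assms(1,2,4) in auto)
  finally have mon: "sigma_mon \<sigma> (raise_vec (n(?e := 1)) \<beta>) = sigma_mon \<sigma> (dot_swap j (raise_vec n \<beta>))" .
  show ?thesis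
    unfolding RD_summand_def supp coeff mon by simp
qed

lemma Sum_any_RD_summand_fun_upd:
  fixes \<sigma> :: "nat \<Rightarrow> int \<Rightarrow> 'a::comm_ring_1"
  assumes "valid_pairs D" and "1 \<le> j" and "Suc j \<le> length \<beta>" and "(j, Suc j) \<notin> D"
    and "\<forall>h<j. (h, j) \<in> D \<longleftrightarrow> (h, Suc j) \<in> D" and "\<sigma> j = \<sigma> (Suc j)"
  shows "Sum_any (\<lambda>n. if n (j, Suc j) = 0 then RD_summand D \<sigma> (pairs_upto (length \<beta>)) \<beta> (n((j, Suc j) := 1)) else 0)
       = - Sum_any (RD_summand D \<sigma> (pairs_upto (length \<beta>) - {(j, Suc j)}) (dot_swap j \<beta>))"
proof -
  let ?l = "length \<beta>" and ?e = "(j, Suc j)"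
  let ?Q = "pairs_upto ?l - {?e}"
  define H where "H n = (if {p. n p \<noteq> 0} \<subseteq> ?Q
    then of_int (RD_coeff D ?l n) * sigma_mon \<sigma> (dot_swap j (raise_vec n \<beta>)) else (0 :: 'a))" for n
  have raised: "(if n ?e = 0 then RD_summand D \<sigma> (pairs_upto ?l) \<beta> (n(?e := 1)) else 0) = - H n" for n
    using RD_summand_fun_upd_one[OF assms(2,3,4,6), of n] by (auto simp: H_def)
  have "Sum_any (RD_summand D \<sigma> ?Q (dot_swap j \<beta>)) = Sum_any H"
  proof (rule Sum_any.reindex_cong[of "\<lambda>n. n \<circ> transpose_pair j"])
    show "bij (\<lambda>n. n \<circ> transpose_pair j)"
      by (rule involuntory_imp_bij) (simp add: comp_def)
    show "RD_summand D \<sigma> ?Q (dot_swap j \<beta>) \<circ> (\<lambda>n. n \<circ> transpose_pair j) = H"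
    proof
      fix n
      show "(RD_summand D \<sigma> ?Q (dot_swap j \<beta>) \<circ> (\<lambda>n. n \<circ> transpose_pair j)) n = H n"
        using support_comp_transpose_pair_iff[OF assms(2,3), of n]
          RD_coeff_comp_transpose_pair[OF assms(1-5), of n] raise_vec_comp_transpose_pair[OF assms(2,3), of n]
        by (simp add: RD_summand_def H_def)
    qed
  qed
  then show ?thesis
    by (simp add: raised Sum_any_uminus)
qed

lemma RD_apply_eq_diff_dot_swap:
  assumes "valid_pairs D" and "1 \<le> j" and "Suc j \<le> length \<beta>" and "(j, Suc j) \<notin> D"
    and "\<forall>h<j. (h, j) \<in> D \<longleftrightarrow> (h, Suc j) \<in> D" and "sigma_normalized \<sigma>" and "\<sigma> j = \<sigma> (Suc j)"
  shows "RD_apply D \<sigma> \<beta> = Sum_any (RD_summand D \<sigma> (pairs_upto (length \<beta>) - {(j, Suc j)}) \<beta>)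
                        - Sum_any (RD_summand D \<sigma> (pairs_upto (length \<beta>) - {(j, Suc j)}) (dot_swap j \<beta>))"
proof -
  have e: "(j, Suc j) \<in> pairs_upto (length \<beta>)"
    using assms(2,3) by (simp add: pairs_upto_def)
  have "RD_apply D \<sigma> \<beta> = Sum_any (RD_summand D \<sigma> (pairs_upto (length \<beta>) - {(j, Suc j)}) \<beta>)
      + Sum_any (\<lambda>n. if n (j, Suc j) = 1 then RD_summand D \<sigma> (pairs_upto (length \<beta>)) \<beta> n else 0)"
    unfolding RD_apply_eq_Sum_any_RD_summand by (rule Sum_any_RD_summand_split[OF assms(6) e assms(4)])
  also have "Sum_any (\<lambda>n. if n (j, Suc j) = 1 then RD_summand D \<sigma> (pairs_upto (length \<beta>)) \<beta> n else 0)
      = Sum_any (\<lambda>n. if n (j, Suc j) = 0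
          then RD_summand D \<sigma> (pairs_upto (length \<beta>)) \<beta> (n((j, Suc j) := 1)) else 0)"
    by (rule Sum_any_fiber_fun_upd) simp
  finally show ?thesis
    unfolding Sum_any_RD_summand_fun_upd[OF assms(1-5,7)] by simp
qed

theorem lemma6:
  fixes \<sigma> :: "nat \<Rightarrow> int \<Rightarrow> 'a::comm_ring_1"
    and j :: nat and lam mu :: "int list" and D :: "(nat \<times> nat) set"
  assumes "j \<ge> 1"
    and "length lam = j - 1"
    and "valid_pairs D"
    and "sigma_normalized \<sigma>"
    and "\<forall>p. \<sigma> j p = \<sigma> (Suc j) p"
    and "(j, Suc j) \<notin> D"
    and "\<forall>h<j. (h, j) \<in> D \<longleftrightarrow> (h, Suc j) \<in> D"
  shows "(\<forall>r s. RD_apply D \<sigma> (lam @ [r, s] @ mu) = - RD_apply D \<sigma> (lam @ [s - 1, r + 1] @ mu))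
       \<and> (\<forall>r z. RD_apply D (tau j z \<sigma>) (lam @ [r, r] @ mu) = RD_apply D \<sigma> (lam @ [r, r] @ mu))"
proof -
  have j: "j = Suc (length lam)"
    using assms(1,2) by simp
  define T where "T \<beta> = Sum_any (RD_summand D \<sigma> (pairs_upto (length \<beta>) - {(j, Suc j)}) \<beta>)" for \<beta>
  have decomp: "RD_apply D \<sigma> (lam @ [r, s] @ mu) = T (lam @ [r, s] @ mu) - T (lam @ [s - 1, r + 1] @ mu)" for r s
    using RD_apply_eq_diff_dot_swap[OF assms(3,1) _ assms(6,7,4), of "lam @ [r, s] @ mu"] assms(5)
    by (simp add: T_def j dot_swap_append fun_eq_iff)
  have tau_eq: "RD_apply D (tau j z \<sigma>) (lam @ [r, r] @ mu)
      = RD_apply D \<sigma> (lam @ [r, r] @ mu) + z * RD_apply D \<sigma> (lam @ [r - 1, r] @ mu)" for r z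
    using RD_apply_tau[OF assms(1) _ assms(4), of "lam @ [r, r] @ mu" D z]
    by (simp add: j list_update_append nth_append)
  show ?thesis
  proof (intro conjI allI)
    show "RD_apply D \<sigma> (lam @ [r, s] @ mu) = - RD_apply D \<sigma> (lam @ [s - 1, r + 1] @ mu)" for r s
      using decomp[of r s] decomp[of "s - 1" "r + 1"] by simp
    have "RD_apply D \<sigma> (lam @ [r - 1, r] @ mu) = 0" for r
      using decomp[of "r - 1" r] by simp
    then show "RD_apply D (tau j z \<sigma>) (lam @ [r, r] @ mu) = RD_apply D \<sigma> (lam @ [r, r] @ mu)" for r z
      unfolding tau_eq by simp
  qed
qed

end
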